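(* Let $G$ be a group, $U$ a nonlocal vertex algebra on which $G$ acts by automorphisms, and $V=\coprod_{g\in G}V[g]$ a nonlocal vertex $G$-graded algebra, and let $U\sharp_GV$ be their smash product. Suppose that $K$ is a nonlocal vertex algebra and $\psi:U\to K$, $\phi:V\to K$ are homomorphisms of nonlocal vertex algebras such that $Y(\phi(v),x_1)Y(\psi(u),x_2)=Y(\psi(gu),x_2)Y(\phi(v),x_1)$ for $u\in U$, $v\in V[g]$, $g\in G$. Then there exists a unique nonlocal vertex algebra homomorphism $f:U\sharp_GV\to K$ extending both $\psi$ and $\phi$, i.e. $f(u\otimes\mathbf{1})=\psi(u)$ and $f(\mathbf{1}\otimes v)=\phi(v)$.
   Context: A nonlocal vertex algebra is a complex vector space $V$ with vector $\mathbf{1}$ and linear $Y:V\to\mathrm{Hom}(V,V((x)))$, $Y(v,x)=\sum_nv_nx^{-n-1}$, with $Y(\mathbf{1},x)v=v$, $Y(v,x)\mathbf{1}\in V[[x]]$ with constant term $v$, and weak associativity $(x_0+x_2)^lY(u,x_0+x_2)Y(v,x_2)w=(x_0+x_2)^lY(Y(u,x_0)v,x_2)w$ for some $l\ge0$; homomorphisms preserve $\mathbf{1}$ and $Y$. A nonlocal vertex $G$-graded algebra ($e$ the identity of $G$) is a nonlocal vertex algebra $V=\coprod_gV[g]$ with $\mathbf{1}\in V[e]$ and $Y(u,x)v\in V[gh]((x))$ for $u\in V[g]$, $v\in V[h]$. The smash product $U\sharp_GV$ is $U\otimes V$ with vacuum $\mathbf{1}\otimes\mathbf{1}$ and vertex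 operators $Y_\sharp(u\otimes v,x)(u'\otimes v')=Y(u,x)g(u')\otimes Y(v,x)v'$ for $u,u'\in U$, $v\in V[g]$, $v'\in V$; it is a nonlocal vertex algebra containing $U\cong U\otimes\mathbf{1}$ and $V\cong\mathbf{1}\otimes V$ as subalgebras. *)

theory Defs
  imports Complex_Main "HOL-Library.Function_Algebras" "HOL-Algebra.Group"
begin

text \<open>A vertex operator Y is encoded by its modes: Y u n v is the coefficient u_n v
  of x^(-n-1) in Y(u,x)v.\<close>

definition nva :: "(complex \<Rightarrow> 'v \<Rightarrow> 'v) \<Rightarrow> 'v::ab_group_add \<Rightarrow> ('v \<Rightarrow> int \<Rightarrow> 'v \<Rightarrow> 'v) \<Rightarrow> bool" where
  "nva sc vac Y \<longleftrightarrow>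
     vector_space sc
   \<and> (\<forall>n v. Vector_Spaces.linear sc sc (\<lambda>u. Y u n v))
   \<and> (\<forall>u n. Vector_Spaces.linear sc sc (Y u n))
   \<comment> \<open>truncation: Y(u,x)v lies in V((x))\<close>
   \<and> (\<forall>u v. \<exists>N. \<forall>n\<ge>N. Y u n v = 0)
   \<comment> \<open>vacuum: Y(1,x)v = v\<close>
   \<and> (\<forall>n v. Y vac n v = (if n = -1 then v else 0))
   \<comment> \<open>creation: Y(v,x)1 in V[[x]] with constant term v\<close>
   \<and> (\<forall>v n. n \<ge> 0 \<longrightarrow> Y v n vac = 0)
   \<and> (\<forall>v. Y v (-1) vac = v)
   \<comment> \<open>weak associativity, coefficient of x0^(-p-1) x2^(-q-1)\<close>
   \<and> (\<forall>u v w. \<exists>l::nat. \<forall>p q::int.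
        (\<Sum>i\<in>{i::nat. Y v (q + int i) w \<noteq> 0}.
            sc ((of_int (int i - p - 1)) gchoose i) (Y u (int l + p - int i) (Y v (q + int i) w)))
      = (\<Sum>j\<le>l. sc (of_nat (l choose j)) (Y (Y u (int l + p - int j) v) (q + int j) w)))"

definition nva_hom ::
  "(complex \<Rightarrow> 'a \<Rightarrow> 'a) \<Rightarrow> 'a::ab_group_add \<Rightarrow> ('a \<Rightarrow> int \<Rightarrow> 'a \<Rightarrow> 'a) \<Rightarrow> 'a set \<Rightarrow>
   (complex \<Rightarrow> 'b \<Rightarrow> 'b) \<Rightarrow> 'b::ab_group_add \<Rightarrow> ('b \<Rightarrow> int \<Rightarrow> 'b \<Rightarrow> 'b) \<Rightarrow> ('a \<Rightarrow> 'b) \<Rightarrow> bool" where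
  "nva_hom scA vacA YA A scB vacB YB f \<longleftrightarrow>
     (\<forall>a\<in>A. \<forall>b\<in>A. f (a + b) = f a + f b)
   \<and> (\<forall>c. \<forall>a\<in>A. f (scA c a) = scB c (f a))
   \<and> f vacA = vacB
   \<and> (\<forall>a\<in>A. \<forall>b\<in>A. \<forall>n. f (YA a n b) = YB (f a) n (f b))"

definition nva_group_action ::
  "('g, 'm) monoid_scheme \<Rightarrow> (complex \<Rightarrow> 'u \<Rightarrow> 'u) \<Rightarrow> 'u::ab_group_add \<Rightarrow> ('u \<Rightarrow> int \<Rightarrow> 'u \<Rightarrow> 'u)
   \<Rightarrow> ('g \<Rightarrow> 'u \<Rightarrow> 'u) \<Rightarrow> bool" where
  "nva_group_action G sc vac Y \<sigma> \<longleftrightarrow>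
     (\<forall>g\<in>carrier G. nva_hom sc vac Y UNIV sc vac Y (\<sigma> g) \<and> bij (\<sigma> g))
   \<and> \<sigma> \<one>\<^bsub>G\<^esub> = id
   \<and> (\<forall>g\<in>carrier G. \<forall>h\<in>carrier G. \<sigma> (g \<otimes>\<^bsub>G\<^esub> h) = \<sigma> g \<circ> \<sigma> h)"

definition nva_graded ::
  "('g, 'm) monoid_scheme \<Rightarrow> (complex \<Rightarrow> 'v \<Rightarrow> 'v) \<Rightarrow> 'v::ab_group_add \<Rightarrow> ('v \<Rightarrow> int \<Rightarrow> 'v \<Rightarrow> 'v)
   \<Rightarrow> ('g \<Rightarrow> 'v set) \<Rightarrow> bool" where
  "nva_graded G sc vac Y Vg \<longleftrightarrow>
     nva sc vac Y
   \<and> (\<forall>g\<in>carrier G. module.subspace sc (Vg g))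
   \<comment> \<open>V is the direct sum of the V[g]\<close>
   \<and> (\<forall>v. \<exists>!vs :: 'g \<Rightarrow> 'v.
          finite {g. vs g \<noteq> 0}
        \<and> (\<forall>g. (g \<in> carrier G \<longrightarrow> vs g \<in> Vg g) \<and> (g \<notin> carrier G \<longrightarrow> vs g = 0))
        \<and> v = (\<Sum>g\<in>{g. vs g \<noteq> 0}. vs g))
   \<and> vac \<in> Vg \<one>\<^bsub>G\<^esub>
   \<and> (\<forall>g\<in>carrier G. \<forall>h\<in>carrier G. \<forall>u\<in>Vg g. \<forall>v\<in>Vg h. \<forall>n. Y u n v \<in> Vg (g \<otimes>\<^bsub>G\<^esub> h))"

text \<open>Concrete model of the algebraic tensor product U \<otimes> V: u \<otimes> v is the bilinear
  form (phi, psi) \<mapsto> phi(u) psi(v) on pairs of linear functionals, and U \<otimes> V is the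
  complex span of these inside the function space.\<close>

type_synonym ('u, 'v) tens = "('u \<Rightarrow> complex) \<Rightarrow> ('v \<Rightarrow> complex) \<Rightarrow> complex"

definition tens ::
  "(complex \<Rightarrow> 'u \<Rightarrow> 'u) \<Rightarrow> (complex \<Rightarrow> 'v \<Rightarrow> 'v) \<Rightarrow> 'u::ab_group_add \<Rightarrow> 'v::ab_group_add \<Rightarrow> ('u, 'v) tens" where
  "tens scU scV u v = (\<lambda>\<phi> \<psi>. if Vector_Spaces.linear scU (*) \<phi> \<and> Vector_Spaces.linear scV (*) \<psi>
                               then \<phi> u * \<psi> v else 0)"

definition tscale :: "complex \<Rightarrow> ('u, 'v) tens \<Rightarrow> ('u, 'v) tens" where
  "tscale c F = (\<lambda>\<phi> \<psi>. c * F \<phi> \<psi>)"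

definition tensor_space ::
  "(complex \<Rightarrow> 'u \<Rightarrow> 'u) \<Rightarrow> (complex \<Rightarrow> 'v \<Rightarrow> 'v) \<Rightarrow> ('u::ab_group_add, 'v::ab_group_add) tens set" where
  "tensor_space scU scV = module.span tscale (range (\<lambda>(u, v). tens scU scV u v))"

text \<open>Ys is the vertex operator of the smash product U \<sharp>_G V on U \<otimes> V: bilinear on
  U \<otimes> V and given on pure tensors (v homogeneous of degree g) by
  Y(u \<otimes> v,x)(u' \<otimes> v') = Y(u,x) g(u') \<otimes> Y(v,x) v'.\<close>

definition smash_Y ::
  "('g, 'm) monoid_scheme \<Rightarrow> (complex \<Rightarrow> 'u \<Rightarrow> 'u) \<Rightarrow> ('u::ab_group_add \<Rightarrow> int \<Rightarrow> 'u \<Rightarrow> 'u) \<Rightarrow> ('g \<Rightarrow> 'u \<Rightarrow> 'u)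
   \<Rightarrow> (complex \<Rightarrow> 'v \<Rightarrow> 'v) \<Rightarrow> ('v::ab_group_add \<Rightarrow> int \<Rightarrow> 'v \<Rightarrow> 'v) \<Rightarrow> ('g \<Rightarrow> 'v set)
   \<Rightarrow> (('u, 'v) tens \<Rightarrow> int \<Rightarrow> ('u, 'v) tens \<Rightarrow> ('u, 'v) tens) \<Rightarrow> bool" where
  "smash_Y G scU YU \<sigma> scV YV Vg Ys \<longleftrightarrow>
     (let T = tensor_space scU scV; t = tens scU scV in
       (\<forall>a\<in>T. \<forall>b\<in>T. \<forall>c\<in>T. \<forall>n. Ys (a + b) n c = Ys a n c + Ys b n c
                            \<and> Ys c n (a + b) = Ys c n a + Ys c n b)
     \<and> (\<forall>z. \<forall>a\<in>T. \<forall>b\<in>T. \<forall>n. Ys (tscale z a) n b = tscale z (Ys a n b)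
                            \<and> Ys b n (tscale z a) = tscale z (Ys b n a))
     \<and> (\<forall>g\<in>carrier G. \<forall>u u' v'. \<forall>v\<in>Vg g. \<forall>n.
          Ys (t u v) n (t u' v')
          = (\<Sum>i\<in>{i. YU u i (\<sigma> g u') \<noteq> 0 \<and> YV v (n - 1 - i) v' \<noteq> 0}.
                t (YU u i (\<sigma> g u')) (YV v (n - 1 - i) v'))))"

end

theory Submission
  imports Defs
begin

text \<open>The bilinear map \<open>u \<otimes> v \<mapsto> \<psi>(u)_{-1} \<phi>(v)\<close> induces a linear map \<open>f\<close> on \<open>U \<otimes> V\<close>.
  The commutation hypothesis lets \<open>\<psi>(u)\<close> pass \<open>\<phi>(v)\<close>, and \<open>\<phi>(v)\<close> pass \<open>\<psi>(u')\<close> at the cost of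
  twisting \<open>u'\<close> by the degree \<open>g\<close> of \<open>v\<close>; so \<open>Y(\<psi>(u), x1) Y(\<phi>(v), x2)\<close> applied to \<open>f(u' \<otimes> v')\<close>
  is \<open>f(Y(u, x1) g(u') \<otimes> Y(v, x2) v')\<close>, truncated in \<open>x1\<close> uniformly in \<open>x2\<close>. For such products
  weak associativity in \<open>K\<close> gives \<open>Y(a_{-1} b, x) = Y(a, x) Y(b, x)\<close>, and with \<open>a = \<psi>(u)\<close>,
  \<open>b = \<phi>(v)\<close> this is exactly \<open>f(Y\<sharp>(u \<otimes> v, x)(u' \<otimes> v')) = Y(f(u \<otimes> v), x) f(u' \<otimes> v')\<close>.
  Uniqueness holds because \<open>u \<otimes> v = (u \<otimes> 1)_{-1} (1 \<otimes> v)\<close> in the smash product.\<close>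

lemma linearD_add: "Vector_Spaces.linear s1 s2 f \<Longrightarrow> f (x + y) = f x + f y"
  by (simp add: Vector_Spaces.linear_iff)

lemma linearD_scale: "Vector_Spaces.linear s1 s2 f \<Longrightarrow> f (s1 c x) = s2 c (f x)"
  by (simp add: Vector_Spaces.linear_iff)

lemma linearD_zero: "Vector_Spaces.linear s1 s2 f \<Longrightarrow> f 0 = 0"
  by (metis add_cancel_right_right add_0 linearD_add)

lemma linearD_sum: "Vector_Spaces.linear s1 s2 f \<Longrightarrow> f (sum g S) = (\<Sum>x\<in>S. f (g x))"
  by (induction S rule: infinite_finite_induct) (auto simp: linearD_zero linearD_add)

locale complex_vector_space = vector_space scale
  for scale :: "complex \<Rightarrow> 'v::ab_group_add \<Rightarrow> 'v"
begin

text \<open>With \<open>A m k = a_m b_k w\<close> and \<open>B m k = (a_m b)_k w\<close>, these are the coefficients of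
  \<open>x0^(-p-1) x2^(-q-1)\<close> in \<open>(x0 + x2)^l Y(a, x0 + x2) Y(b, x2) w\<close> (the sum over \<open>i\<close> cut off
  at \<open>R\<close>) and in \<open>(x0 + x2)^l Y(Y(a, x0) b, x2) w\<close>.\<close>

definition assoc_lhs :: "(int \<Rightarrow> int \<Rightarrow> 'v) \<Rightarrow> nat \<Rightarrow> int \<Rightarrow> int \<Rightarrow> nat \<Rightarrow> 'v" where
  "assoc_lhs A l p q R =
     (\<Sum>i\<le>R. scale ((of_int (int i - p - 1)) gchoose i) (A (int l + p - int i) (q + int i)))"

definition assoc_rhs :: "(int \<Rightarrow> int \<Rightarrow> 'v) \<Rightarrow> nat \<Rightarrow> int \<Rightarrow> int \<Rightarrow> 'v" where
  "assoc_rhs B l p q = (\<Sum>j\<le>l. scale (of_nat (l choose j)) (B (int l + p - int j) (q + int j)))"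

lemma assoc_lhs_Suc:
  "assoc_lhs A (Suc l) p q (Suc R) = assoc_lhs A l (p + 1) q (Suc R) + assoc_lhs A l p (q + 1) R"
proof -
  let ?a = "\<lambda>i. A (int l + p - int i) (q + int i + 1)"
  have pascal: "(of_int (int i - p) :: complex) gchoose Suc i
      = (of_int (int i - p - 1) gchoose i) + (of_int (int i - p - 1) gchoose Suc i)" for i
    using gbinomial_Suc_Suc[of "of_int (int i - p - 1) :: complex" i] by simp
  have "assoc_lhs A (Suc l) p q (Suc R)
      = A (int l + p + 1) q + (\<Sum>i\<le>R. scale ((of_int (int i - p)) gchoose Suc i) (?a i))"
    unfolding assoc_lhs_def by (subst sum.atMost_Suc_shift) (simp add: algebra_simps)
  also have "\<dots> = A (int l + p + 1) q
      + ((\<Sum>i\<le>R. scale ((of_int (int i - p - 1)) gchoose Suc i) (?a i))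
      + (\<Sum>i\<le>R. scale ((of_int (int i - p - 1)) gchoose i) (?a i)))"
    by (simp only: pascal scale_left_distrib sum.distrib add.commute)
  also have "\<dots> = assoc_lhs A l (p + 1) q (Suc R) + assoc_lhs A l p (q + 1) R"
    unfolding assoc_lhs_def by (subst sum.atMost_Suc_shift) (simp add: algebra_simps)
  finally show ?thesis .
qed

lemma assoc_rhs_Suc: "assoc_rhs B (Suc l) p q = assoc_rhs B l (p + 1) q + assoc_rhs B l p (q + 1)"
proof -
  let ?b = "\<lambda>j. B (int l + p - int j) (q + int j + 1)"
  have "assoc_rhs B (Suc l) p q
      = B (int l + p + 1) q + (\<Sum>j\<le>l. scale (of_nat (Suc l choose Suc j)) (?b j))"
    unfolding assoc_rhs_def by (subst sum.atMost_Suc_shift) (simp add: algebra_simps)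
  moreover have "assoc_rhs B l (p + 1) q
      = (\<Sum>j\<le>Suc l. scale (of_nat (l choose j)) (B (int l + (p + 1) - int j) (q + int j)))"
    unfolding assoc_rhs_def by simp
  moreover have "\<dots> = B (int l + p + 1) q + (\<Sum>j\<le>l. scale (of_nat (l choose Suc j)) (?b j))"
    by (subst sum.atMost_Suc_shift) (simp add: algebra_simps)
  moreover have "assoc_rhs B l p (q + 1) = (\<Sum>j\<le>l. scale (of_nat (l choose j)) (?b j))"
    unfolding assoc_rhs_def by (simp add: algebra_simps)
  ultimately show ?thesis
    by (simp add: scale_left_distrib sum.distrib algebra_simps)
qed

lemma assoc_lhs_cutoff:
  assumes "\<And>m k. k \<ge> M \<Longrightarrow> A m k = 0" and "nat (M - q) \<le> R" and "R \<le> R'"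
  shows "assoc_lhs A l p q R' = assoc_lhs A l p q R"
  unfolding assoc_lhs_def by (rule sum.mono_neutral_right) (use assms in auto)

text \<open>Multiplying both sides of weak associativity by \<open>x0 + x2\<close> is the Pascal recursion of the two
  coefficient sums.\<close>

lemma assoc_coeffs_eq_mono:
  assumes A: "\<And>m k. k \<ge> M \<Longrightarrow> A m k = 0"
    and eq: "\<And>p q R. nat (M - q) \<le> R \<Longrightarrow> assoc_lhs A l p q R = assoc_rhs B l p q"
    and "l \<le> L" and "nat (M - q) \<le> R"
  shows "assoc_lhs A L p q R = assoc_rhs B L p q"
  using \<open>l \<le> L\<close> \<open>nat (M - q) \<le> R\<close>
proof (induction L arbitrary: p q R rule: dec_induct)
  case base
  then show ?case by (rule eq)
next
  case (step L)
  have "assoc_lhs A (Suc L) p q R = assoc_lhs A (Suc L) p q (Suc R)"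
    using assoc_lhs_cutoff[OF A step.prems, where R'="Suc R"] by simp
  also have "\<dots> = assoc_lhs A L (p + 1) q (Suc R) + assoc_lhs A L p (q + 1) R"
    by (rule assoc_lhs_Suc)
  also have "\<dots> = assoc_rhs B L (p + 1) q + assoc_rhs B L p (q + 1)"
    using step.IH step.prems by simp
  also have "\<dots> = assoc_rhs B (Suc L) p q"
    by (rule assoc_rhs_Suc[symmetric])
  finally show ?case .
qed

lemma assoc_lhs_eq_0:
  assumes "\<And>m k. int l \<le> m \<Longrightarrow> A m k = 0" and "0 \<le> p"
  shows "assoc_lhs A l p q R = 0"
  unfolding assoc_lhs_def
proof (rule sum.neutral, rule ballI)
  fix i
  show "scale ((of_int (int i - p - 1)) gchoose i) (A (int l + p - int i) (q + int i)) = 0"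
  proof (cases "int i \<le> p")
    case True
    then show ?thesis using assms(1)[of "int l + p - int i"] by simp
  next
    case False
    then have "(of_int (int i - p - 1) :: complex) = of_nat (nat (int i - p - 1))"
      and "nat (int i - p - 1) < i"
      using \<open>0 \<le> p\<close> by auto
    then have "(of_int (int i - p - 1) :: complex) gchoose i = 0"
      by (simp add: binomial_gbinomial[symmetric] binomial_eq_0)
    then show ?thesis by simp
  qed
qed

lemma assoc_lhs_minus_one: "assoc_lhs A l (-1) q R = (\<Sum>i\<le>R. A (int l - 1 - int i) (q + int i))"
proof -
  have "(of_int (int i - (-1) - 1) :: complex) gchoose i = 1" for i
    using binomial_gbinomial[of i i, where 'a=complex] by simp
  then show ?thesis unfolding assoc_lhs_def by (simp add: algebra_simps)
qed

lemma assoc_rhs_top: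
  assumes "\<And>m' k. m' > m \<Longrightarrow> B m' k = 0"
  shows "assoc_rhs B l m q = B m (q + int l)"
proof -
  have "assoc_rhs B l m q = scale (of_nat (l choose l)) (B (int l + m - int l) (q + int l))
      + (\<Sum>j\<in>{..l} - {l}. scale (of_nat (l choose j)) (B (int l + m - int j) (q + int j)))"
    unfolding assoc_rhs_def by (rule sum.remove) auto
  also have "(\<Sum>j\<in>{..l} - {l}. scale (of_nat (l choose j)) (B (int l + m - int j) (q + int j))) = 0"
    by (rule sum.neutral) (auto simp: assms)
  finally show ?thesis by simp
qed

end

locale nonlocal_va =
  fixes sc :: "complex \<Rightarrow> 'v::ab_group_add \<Rightarrow> 'v" and vac :: 'v and Y :: "'v \<Rightarrow> int \<Rightarrow> 'v \<Rightarrow> 'v"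
  assumes nva: "nva sc vac Y"
begin

sublocale complex_vector_space sc
  using nva by (simp add: nva_def complex_vector_space_def)

lemma linear_Y_left: "Vector_Spaces.linear sc sc (\<lambda>u. Y u n v)"
  using nva by (simp add: nva_def)

lemma linear_Y_right: "Vector_Spaces.linear sc sc (Y u n)"
  using nva by (simp add: nva_def)

lemma Y_add_left: "Y (u + u') n v = Y u n v + Y u' n v"
  and Y_add_right: "Y u n (v + v') = Y u n v + Y u n v'"
  and Y_scale_left: "Y (sc c u) n v = sc c (Y u n v)"
  and Y_scale_right: "Y u n (sc c v) = sc c (Y u n v)"
  and Y_zero_left: "Y 0 n v = 0"
  and Y_zero_right: "Y u n 0 = 0"
  using linearD_add[OF linear_Y_left] linearD_add[OF linear_Y_right]
    linearD_scale[OF linear_Y_left] linearD_scale[OF linear_Y_right]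
    linearD_zero[OF linear_Y_left] linearD_zero[OF linear_Y_right]
  by blast+

lemma Y_vac_left: "Y vac n v = (if n = -1 then v else 0)"
  and Y_vac_right_nonneg: "0 \<le> n \<Longrightarrow> Y v n vac = 0"
  and Y_vac_right_minus_one: "Y v (-1) vac = v"
  and Y_truncation: "\<exists>N. \<forall>n\<ge>N. Y u n v = 0"
  using nva by (simp_all add: nva_def)

lemma weak_assoc_coeffs:
  obtains M l where "\<And>k. M \<le> k \<Longrightarrow> Y b k w = 0"
    and "\<And>p q R. nat (M - q) \<le> R \<Longrightarrow>
      assoc_lhs (\<lambda>m k. Y a m (Y b k w)) l p q R = assoc_rhs (\<lambda>m k. Y (Y a m b) k w) l p q"
proof -
  obtain M where M: "\<And>k. M \<le> k \<Longrightarrow> Y b k w = 0"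
    using Y_truncation by blast
  from nva obtain l where assoc: "\<And>p q. (\<Sum>i\<in>{i::nat. Y b (q + int i) w \<noteq> 0}.
      sc ((of_int (int i - p - 1)) gchoose i) (Y a (int l + p - int i) (Y b (q + int i) w)))
      = assoc_rhs (\<lambda>m k. Y (Y a m b) k w) l p q"
    unfolding nva_def assoc_rhs_def by blast
  have "assoc_lhs (\<lambda>m k. Y a m (Y b k w)) l p q R = assoc_rhs (\<lambda>m k. Y (Y a m b) k w) l p q"
    if R: "nat (M - q) \<le> R" for p q R
    unfolding assoc[symmetric] assoc_lhs_def
  proof (rule sum.mono_neutral_left[symmetric])
    show "{i. Y b (q + int i) w \<noteq> 0} \<subseteq> {..R}"
    proof
      fix i assume "i \<in> {i. Y b (q + int i) w \<noteq> 0}"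
      then have "q + int i < M" using M not_le by blast
      then show "i \<in> {..R}" using R by auto
    qed
  qed (auto simp: Y_zero_right)
  with M show thesis by (rule that)
qed

text \<open>If \<open>a_m b_k w\<close> vanishes for \<open>m \<ge> N\<close> uniformly in \<open>k\<close>, weak associativity may be used with an
  exponent \<open>L \<ge> N\<close>, which makes the left-hand side free of negative powers of \<open>x0\<close>.\<close>

lemma weak_assoc_truncated:
  assumes "\<And>m k. m \<ge> N \<Longrightarrow> Y a m (Y b k w) = 0"
  obtains L M where "\<And>m k. int L \<le> m \<Longrightarrow> Y a m (Y b k w) = 0"
    and "\<And>k. M \<le> k \<Longrightarrow> Y b k w = 0"
    and "\<And>p q R. nat (M - q) \<le> R \<Longrightarrow>
      assoc_lhs (\<lambda>m k. Y a m (Y b k w)) L p q R = assoc_rhs (\<lambda>m k. Y (Y a m b) k w) L p q"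
proof -
  obtain l M where M: "\<And>k. M \<le> k \<Longrightarrow> Y b k w = 0"
    and eq: "\<And>p q R. nat (M - q) \<le> R \<Longrightarrow>
      assoc_lhs (\<lambda>m k. Y a m (Y b k w)) l p q R = assoc_rhs (\<lambda>m k. Y (Y a m b) k w) l p q"
    using weak_assoc_coeffs[where a=a and b=b and w=w] by metis
  show thesis
  proof (rule that[of "l + nat N" M])
    show "Y a m (Y b k w) = 0" if "int (l + nat N) \<le> m" for m k
      using that by (intro assms) linarith
  next
    show "assoc_lhs (\<lambda>m k. Y a m (Y b k w)) (l + nat N) p q R = assoc_rhs (\<lambda>m k. Y (Y a m b) k w) (l + nat N) p q"
      if "nat (M - q) \<le> R" for p q R
      by (rule assoc_coeffs_eq_mono[OF _ eq _ that]) (simp_all add: M Y_zero_right)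
  qed (rule M)
qed

lemma Y_product_nonneg_eq_0:
  assumes trunc: "\<And>m k. m \<ge> N \<Longrightarrow> Y a m (Y b k w) = 0" and "0 \<le> m"
  shows "Y (Y a m b) k w = 0"
proof -
  obtain L M where L: "\<And>m k. int L \<le> m \<Longrightarrow> Y a m (Y b k w) = 0"
    and eq: "\<And>p q R. nat (M - q) \<le> R \<Longrightarrow>
      assoc_lhs (\<lambda>m k. Y a m (Y b k w)) L p q R = assoc_rhs (\<lambda>m k. Y (Y a m b) k w) L p q"
    using weak_assoc_truncated[OF trunc] by metis
  obtain M' where M': "\<And>m. M' \<le> m \<Longrightarrow> Y a m b = 0"
    using Y_truncation by blast
  have "\<forall>m k. 0 \<le> m \<longrightarrow> M' - int d \<le> m \<longrightarrow> Y (Y a m b) k w = 0" for d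
  proof (induction d)
    case 0
    then show ?case by (simp add: M' Y_zero_left)
  next
    case (Suc d)
    show ?case
    proof (intro allI impI)
      fix m k assume "0 \<le> m" "M' - int (Suc d) \<le> m"
      with Suc.IH have above: "Y (Y a m' b) k' w = 0" if "m' > m" for m' k'
        using that by auto
      define q where "q = k - int L"
      have "Y (Y a m b) k w = assoc_rhs (\<lambda>m k. Y (Y a m b) k w) L m q"
        using assoc_rhs_top[of m "\<lambda>m k. Y (Y a m b) k w", OF above] by (simp add: q_def)
      also have "\<dots> = assoc_lhs (\<lambda>m k. Y a m (Y b k w)) L m q (nat (M - q))"
        by (rule eq[symmetric]) simp
      also have "\<dots> = 0"
        by (rule assoc_lhs_eq_0[OF L \<open>0 \<le> m\<close>])
      finally show "Y (Y a m b) k w = 0" .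
    qed
  qed
  from this[of "nat (M' - m)"] show ?thesis
    using \<open>0 \<le> m\<close> by simp
qed

text \<open>The coefficient of \<open>x0^0\<close> in weak associativity: \<open>Y(a_{-1}b, x) = Y(a, x) Y(b, x)\<close>.\<close>

lemma Y_product_minus_one:
  assumes trunc: "\<And>m k. m \<ge> N \<Longrightarrow> Y a m (Y b k w) = 0"
  shows "Y (Y a (-1) b) n w = (\<Sum>i\<in>{i. Y a i (Y b (n - 1 - i) w) \<noteq> 0}. Y a i (Y b (n - 1 - i) w))"
proof -
  obtain L M where L: "\<And>m k. int L \<le> m \<Longrightarrow> Y a m (Y b k w) = 0"
    and M: "\<And>k. M \<le> k \<Longrightarrow> Y b k w = 0"
    and eq: "\<And>p q R. nat (M - q) \<le> R \<Longrightarrow>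
      assoc_lhs (\<lambda>m k. Y a m (Y b k w)) L p q R = assoc_rhs (\<lambda>m k. Y (Y a m b) k w) L p q"
    using weak_assoc_truncated[OF trunc] by metis
  define S where "S = {j. Y a j (Y b (n - 1 - j) w) \<noteq> 0}"
  define h where "h i = int L - 1 - int i" for i :: nat
  define q where "q = n - int L"
  define R where "R = nat (M - q)"
  have S_bounds: "j < int L" "n - 1 - j < M" if "j \<in> S" for j
  proof -
    have nz: "Y a j (Y b (n - 1 - j) w) \<noteq> 0"
      using that by (simp add: S_def)
    show "j < int L"
      using L[of j] nz by (metis not_le)
    show "n - 1 - j < M"
      using M[of "n - 1 - j"] nz by (metis Y_zero_right not_le)
  qed
  have above: "Y (Y a m b) k w = 0" if "-1 < m" for m k
    using Y_product_nonneg_eq_0[where N=N, OF trunc, of m] that by simp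
  have "Y (Y a (-1) b) n w = assoc_rhs (\<lambda>m k. Y (Y a m b) k w) L (-1) q"
    using assoc_rhs_top[of "-1" "\<lambda>m k. Y (Y a m b) k w", OF above] unfolding q_def by simp
  also have "\<dots> = assoc_lhs (\<lambda>m k. Y a m (Y b k w)) L (-1) q R"
    by (rule eq[symmetric]) (simp add: R_def)
  also have "\<dots> = (\<Sum>i\<le>R. Y a (h i) (Y b (n - 1 - h i) w))"
    unfolding assoc_lhs_minus_one by (rule sum.cong) (simp_all add: h_def q_def algebra_simps)
  also have "\<dots> = (\<Sum>j\<in>h ` {..R}. Y a j (Y b (n - 1 - j) w))"
    by (rule sum.reindex[symmetric, unfolded comp_def]) (auto simp: inj_on_def h_def)
  also have "\<dots> = (\<Sum>j\<in>S. Y a j (Y b (n - 1 - j) w))"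
  proof (rule sum.mono_neutral_right)
    show "S \<subseteq> h ` {..R}"
    proof
      fix j assume "j \<in> S"
      then have "j = h (nat (int L - 1 - j))" "nat (int L - 1 - j) \<in> {..R}"
        using S_bounds[OF \<open>j \<in> S\<close>] by (auto simp: h_def R_def q_def)
      then show "j \<in> h ` {..R}" by (rule image_eqI)
    qed
  qed (simp_all add: S_def)
  finally show ?thesis
    unfolding S_def .
qed

end

lemma sum_fun_apply: "(sum g S) x = (\<Sum>i\<in>S. g i x)"
  by (induction S rule: infinite_finite_induct) (auto simp: plus_fun_def zero_fun_def)

lemma vector_space_tscale: "vector_space (tscale :: complex \<Rightarrow> ('u::ab_group_add, 'v::ab_group_add) tens \<Rightarrow> _)"
  by unfold_locales (simp_all add: tscale_def fun_eq_iff algebra_simps plus_fun_def)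

lemma tscale_zero [simp]: "tscale 0 a = 0"
  by (simp add: tscale_def zero_fun_def)

lemma linear_tens_left:
  assumes "vector_space scU" "vector_space scV"
  shows "Vector_Spaces.linear scU tscale (\<lambda>u. tens scU scV u v)"
  unfolding Vector_Spaces.linear_iff using assms vector_space_tscale
  by (auto simp: tens_def tscale_def fun_eq_iff plus_fun_def
      linearD_add linearD_scale algebra_simps)

lemma linear_tens_right:
  assumes "vector_space scU" "vector_space scV"
  shows "Vector_Spaces.linear scV tscale (tens scU scV u)"
  unfolding Vector_Spaces.linear_iff using assms vector_space_tscale
  by (auto simp: tens_def tscale_def fun_eq_iff plus_fun_def
      linearD_add linearD_scale algebra_simps)

lemma tens_in_tensor_space: "tens scU scV u v \<in> tensor_space scU scV"
  unfolding tensor_space_def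
  by (rule module.span_base[OF vector_space_tscale[unfolded module_iff_vector_space[symmetric]]]) auto

lemma tensor_space_induct [consumes 1, case_names tens add scale]:
  assumes "a \<in> tensor_space scU scV"
    and "\<And>u v. P (tens scU scV u v)"
    and "\<And>a b. a \<in> tensor_space scU scV \<Longrightarrow> b \<in> tensor_space scU scV \<Longrightarrow> P a \<Longrightarrow> P b \<Longrightarrow> P (a + b)"
    and "\<And>c a. a \<in> tensor_space scU scV \<Longrightarrow> P a \<Longrightarrow> P (tscale c a)"
  shows "P a"
proof -
  interpret T: vector_space "tscale :: complex \<Rightarrow> ('a, 'b) tens \<Rightarrow> _"
    by (rule vector_space_tscale)
  let ?Q = "\<lambda>a. a \<in> tensor_space scU scV \<and> P a"
  have "P 0"
    using assms(4)[OF tens_in_tensor_space assms(2), of 0] by simp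
  then have sub: "T.subspace (Collect ?Q)"
    using assms(3,4) unfolding T.subspace_def tensor_space_def
    by (auto intro: T.span_zero T.span_add T.span_scale)
  have "a \<in> T.span (range (\<lambda>(u, v). tens scU scV u v))"
    using assms(1) by (simp add: tensor_space_def)
  then have "?Q a"
    by (rule T.span_induct[OF _ sub]) (auto simp: assms(2) tens_in_tensor_space)
  then show ?thesis by simp
qed

lemma bilinear_expansion:
  fixes sU :: "complex \<Rightarrow> 'u::ab_group_add \<Rightarrow> 'u" and sV :: "complex \<Rightarrow> 'v::ab_group_add \<Rightarrow> 'v"
    and sW :: "complex \<Rightarrow> 'w::ab_group_add \<Rightarrow> 'w"
  assumes "vector_space sU" "vector_space sV" "vector_space sW"
    and BU: "\<not> module.dependent sU BU" "module.span sU BU = UNIV"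
    and BV: "\<not> module.dependent sV BV" "module.span sV BV = UNIV"
    and left: "\<And>v. Vector_Spaces.linear sU sW (\<lambda>u. P u v)"
    and right: "\<And>u. Vector_Spaces.linear sV sW (P u)"
  shows "P u v = (\<Sum>\<alpha>\<in>{\<alpha>. module.representation sU BU u \<alpha> \<noteq> 0}. \<Sum>\<beta>\<in>{\<beta>. module.representation sV BV v \<beta> \<noteq> 0}.
            sW (module.representation sU BU u \<alpha> * module.representation sV BV v \<beta>) (P \<alpha> \<beta>))"
proof -
  interpret U: vector_space sU by fact
  interpret V: vector_space sV by fact
  interpret W: vector_space sW by fact
  let ?ru = "U.representation BU u" and ?rv = "V.representation BV v"
  have u: "(\<Sum>\<alpha>\<in>{\<alpha>. ?ru \<alpha> \<noteq> 0}. sU (?ru \<alpha>) \<alpha>) = u"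
    using U.sum_nonzero_representation_eq[of BU u] BU by simp
  have v: "(\<Sum>\<beta>\<in>{\<beta>. ?rv \<beta> \<noteq> 0}. sV (?rv \<beta>) \<beta>) = v"
    using V.sum_nonzero_representation_eq[of BV v] BV by simp
  have "P u v = (\<Sum>\<alpha>\<in>{\<alpha>. ?ru \<alpha> \<noteq> 0}. sW (?ru \<alpha>) (P \<alpha> v))"
    by (subst (1) u[symmetric]) (simp add: linearD_sum[OF left] linearD_scale[OF left])
  also have "\<dots> = (\<Sum>\<alpha>\<in>{\<alpha>. ?ru \<alpha> \<noteq> 0}. \<Sum>\<beta>\<in>{\<beta>. ?rv \<beta> \<noteq> 0}. sW (?ru \<alpha> * ?rv \<beta>) (P \<alpha> \<beta>))"
    by (subst (1) v[symmetric])
      (simp add: linearD_sum[OF right] linearD_scale[OF right] W.scale_sum_right)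
  finally show ?thesis .
qed

locale tensor_pair = U: vector_space scU + V: vector_space scV
  for scU :: "complex \<Rightarrow> 'u::ab_group_add \<Rightarrow> 'u" and scV :: "complex \<Rightarrow> 'v::ab_group_add \<Rightarrow> 'v"
begin

sublocale T: vector_space "tscale :: complex \<Rightarrow> ('u, 'v) tens \<Rightarrow> _"
  by (rule vector_space_tscale)

abbreviation (input) tens_pair :: "'u \<times> 'v \<Rightarrow> ('u, 'v) tens" where
  "tens_pair \<equiv> (\<lambda>(u, v). tens scU scV u v)"

lemma tens_basis_coordinates:
  assumes BU: "U.independent BU" "U.span BU = UNIV" and BV: "V.independent BV" "V.span BV = UNIV"
    and "\<alpha> \<in> BU" "\<beta> \<in> BV"
  shows "tens scU scV \<alpha> \<beta> (\<lambda>x. U.representation BU x \<alpha>0) (\<lambda>x. V.representation BV x \<beta>0)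
    = (if \<alpha> = \<alpha>0 \<and> \<beta> = \<beta>0 then 1 else 0)"
  using assms U.linear_representation[OF BU] V.linear_representation[OF BV]
    U.representation_basis[OF BU(1)] V.representation_basis[OF BV(1)]
  by (simp add: tens_def)

lemma inj_on_tens_basis:
  assumes BU: "U.independent BU" "U.span BU = UNIV" and BV: "V.independent BV" "V.span BV = UNIV"
  shows "inj_on tens_pair (BU \<times> BV)"
proof (rule inj_onI, clarify)
  fix \<alpha> \<beta> \<alpha>' \<beta>' assume "\<alpha> \<in> BU" "\<beta> \<in> BV" "\<alpha>' \<in> BU" "\<beta>' \<in> BV"
    and "tens scU scV \<alpha> \<beta> = tens scU scV \<alpha>' \<beta>'"
  then have "tens scU scV \<alpha>' \<beta>' (\<lambda>x. U.representation BU x \<alpha>) (\<lambda>x. V.representation BV x \<beta>) = 1"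
    using tens_basis_coordinates[OF BU BV, of \<alpha> \<beta> \<alpha> \<beta>] by simp
  then show "\<alpha> = \<alpha>' \<and> \<beta> = \<beta>'"
    using tens_basis_coordinates[OF BU BV \<open>\<alpha>' \<in> BU\<close> \<open>\<beta>' \<in> BV\<close>, of \<alpha> \<beta>]
    by (simp split: if_splits)
qed

lemma independent_tens_basis:
  assumes BU: "U.independent BU" "U.span BU = UNIV" and BV: "V.independent BV" "V.span BV = UNIV"
  shows "T.independent (tens_pair ` (BU \<times> BV))"
proof
  assume "T.dependent (tens_pair ` (BU \<times> BV))"
  then obtain t c where t: "finite t" "t \<subseteq> tens_pair ` (BU \<times> BV)"
    and sum0: "(\<Sum>F\<in>t. tscale (c F) F) = 0" and "\<exists>F0\<in>t. c F0 \<noteq> 0"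
    unfolding T.dependent_explicit by blast
  then obtain F0 where "F0 \<in> t" "c F0 \<noteq> 0"
    by blast
  have pure: "\<exists>\<alpha> \<beta>. \<alpha> \<in> BU \<and> \<beta> \<in> BV \<and> F = tens scU scV \<alpha> \<beta>" if "F \<in> t" for F
    using subsetD[OF t(2) that] by auto
  obtain \<alpha>0 \<beta>0 where ab0: "\<alpha>0 \<in> BU" "\<beta>0 \<in> BV" "F0 = tens scU scV \<alpha>0 \<beta>0"
    using pure[OF \<open>F0 \<in> t\<close>] by blast
  let ?cU = "\<lambda>x. U.representation BU x \<alpha>0" and ?cV = "\<lambda>x. V.representation BV x \<beta>0"
  have coord: "F ?cU ?cV = (if F = F0 then 1 else 0)" if F: "F \<in> t" for F
  proof -
    obtain \<alpha> \<beta> where ab: "\<alpha> \<in> BU" "\<beta> \<in> BV" "F = tens scU scV \<alpha> \<beta>"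
      using pure[OF F] by blast
    have "F = F0 \<longleftrightarrow> \<alpha> = \<alpha>0 \<and> \<beta> = \<beta>0"
      using inj_onD[OF inj_on_tens_basis[OF BU BV], of "(\<alpha>, \<beta>)" "(\<alpha>0, \<beta>0)"] ab ab0 by auto
    then show ?thesis
      using tens_basis_coordinates[OF BU BV ab(1,2), of \<alpha>0 \<beta>0] ab(3) by simp
  qed
  have "(\<Sum>F\<in>t. tscale (c F) F) ?cU ?cV = (\<Sum>F\<in>t. c F * F ?cU ?cV)"
    by (simp add: sum_fun_apply tscale_def)
  also have "\<dots> = (\<Sum>F\<in>t. if F = F0 then c F else 0)"
    by (rule sum.cong) (simp_all add: coord)
  also have "\<dots> = c F0"
    using t(1) \<open>F0 \<in> t\<close> by simp
  finally have "c F0 = 0"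
    by (simp add: sum0 zero_fun_def)
  with \<open>c F0 \<noteq> 0\<close> show False ..
qed

lemma tensor_universal:
  fixes scK :: "complex \<Rightarrow> 'k::ab_group_add \<Rightarrow> 'k" and B :: "'u \<Rightarrow> 'v \<Rightarrow> 'k"
  assumes "vector_space scK"
    and left: "\<And>v. Vector_Spaces.linear scU scK (\<lambda>u. B u v)"
    and right: "\<And>u. Vector_Spaces.linear scV scK (B u)"
  obtains f where "Vector_Spaces.linear tscale scK f" and "\<And>u v. f (tens scU scV u v) = B u v"
proof -
  interpret K: vector_space scK by fact
  interpret P: vector_space_pair "tscale :: complex \<Rightarrow> ('u, 'v) tens \<Rightarrow> _" scK ..
  define BU where "BU = U.extend_basis {}"
  define BV where "BV = V.extend_basis {}"
  have BU: "U.independent BU" "U.span BU = UNIV"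
    unfolding BU_def by (simp_all add: U.independent_extend_basis U.independent_empty)
  have BV: "V.independent BV" "V.span BV = UNIV"
    unfolding BV_def by (simp_all add: V.independent_extend_basis V.independent_empty)
  define f where "f = P.construct (tens_pair ` (BU \<times> BV))
    (\<lambda>F. case_prod B (the_inv_into (BU \<times> BV) tens_pair F))"
  have lin: "Vector_Spaces.linear tscale scK f"
    unfolding f_def by (rule P.linear_construct[OF independent_tens_basis[OF BU BV]])
  have on_basis: "f (tens scU scV \<alpha> \<beta>) = B \<alpha> \<beta>" if "\<alpha> \<in> BU" "\<beta> \<in> BV" for \<alpha> \<beta>
  proof -
    have mem: "tens scU scV \<alpha> \<beta> \<in> tens_pair ` (BU \<times> BV)"
      using that by force
    have inv: "the_inv_into (BU \<times> BV) tens_pair (tens scU scV \<alpha> \<beta>) = (\<alpha>, \<beta>)"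
      using the_inv_into_f_f[OF inj_on_tens_basis[OF BU BV], of "(\<alpha>, \<beta>)"] that by simp
    show ?thesis
      unfolding f_def P.construct_basis[OF independent_tens_basis[OF BU BV] mem] inv by simp
  qed
  have "f (tens scU scV u v) = B u v" for u v
  proof -
    let ?ru = "U.representation BU u" and ?rv = "V.representation BV v"
    have "f (tens scU scV u v) = (\<Sum>\<alpha>\<in>{\<alpha>. ?ru \<alpha> \<noteq> 0}. \<Sum>\<beta>\<in>{\<beta>. ?rv \<beta> \<noteq> 0}.
        scK (?ru \<alpha> * ?rv \<beta>) (f (tens scU scV \<alpha> \<beta>)))"
      by (subst bilinear_expansion[OF U.vector_space_axioms V.vector_space_axioms T.vector_space_axioms
            BU BV linear_tens_left linear_tens_right])
        (simp_all add: linearD_sum[OF lin] linearD_scale[OF lin] U.vector_space_axioms V.vector_space_axioms)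
    also have "\<dots> = (\<Sum>\<alpha>\<in>{\<alpha>. ?ru \<alpha> \<noteq> 0}. \<Sum>\<beta>\<in>{\<beta>. ?rv \<beta> \<noteq> 0}. scK (?ru \<alpha> * ?rv \<beta>) (B \<alpha> \<beta>))"
      using U.representation_ne_zero V.representation_ne_zero
      by (intro sum.cong refl) (simp add: on_basis)
    also have "\<dots> = B u v"
      by (rule bilinear_expansion[OF U.vector_space_axioms V.vector_space_axioms K.vector_space_axioms
            BU BV left right, symmetric])
    finally show ?thesis .
  qed
  with lin show thesis by (rule that)
qed

end

locale smash_universal =
  fixes G :: "('g, 'm) monoid_scheme"
    and scU :: "complex \<Rightarrow> 'u::ab_group_add \<Rightarrow> 'u" and oneU :: 'u and YU :: "'u \<Rightarrow> int \<Rightarrow> 'u \<Rightarrow> 'u"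
    and \<sigma> :: "'g \<Rightarrow> 'u \<Rightarrow> 'u"
    and scV :: "complex \<Rightarrow> 'v::ab_group_add \<Rightarrow> 'v" and oneV :: 'v and YV :: "'v \<Rightarrow> int \<Rightarrow> 'v \<Rightarrow> 'v"
    and Vg :: "'g \<Rightarrow> 'v set"
    and Ys :: "('u, 'v) tens \<Rightarrow> int \<Rightarrow> ('u, 'v) tens \<Rightarrow> ('u, 'v) tens"
    and scK :: "complex \<Rightarrow> 'k::ab_group_add \<Rightarrow> 'k" and oneK :: 'k and YK :: "'k \<Rightarrow> int \<Rightarrow> 'k \<Rightarrow> 'k"
    and \<psi> :: "'u \<Rightarrow> 'k" and \<phi> :: "'v \<Rightarrow> 'k"
  assumes group: "group G"
    and U_nva: "nva scU oneU YU"
    and action: "nva_group_action G scU oneU YU \<sigma>"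
    and graded: "nva_graded G scV oneV YV Vg"
    and smash: "smash_Y G scU YU \<sigma> scV YV Vg Ys"
    and K_nva: "nva scK oneK YK"
    and psi_hom: "nva_hom scU oneU YU UNIV scK oneK YK \<psi>"
    and phi_hom: "nva_hom scV oneV YV UNIV scK oneK YK \<phi>"
    and commute: "\<forall>g\<in>carrier G. \<forall>u. \<forall>v\<in>Vg g. \<forall>m n w.
      YK (\<phi> v) m (YK (\<psi> u) n w) = YK (\<psi> (\<sigma> g u)) n (YK (\<phi> v) m w)"
begin

sublocale U: nonlocal_va scU oneU YU
  by (rule nonlocal_va.intro[OF U_nva])

sublocale V: nonlocal_va scV oneV YV
  using graded by (simp add: nonlocal_va_def nva_graded_def)

sublocale K: nonlocal_va scK oneK YK
  by (rule nonlocal_va.intro[OF K_nva])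

sublocale tensor_pair scU scV ..

lemma psi_add: "\<psi> (x + y) = \<psi> x + \<psi> y"
  and psi_scale: "\<psi> (scU c x) = scK c (\<psi> x)"
  and psi_vac: "\<psi> oneU = oneK"
  and psi_Y: "\<psi> (YU x n y) = YK (\<psi> x) n (\<psi> y)"
  using psi_hom by (simp_all add: nva_hom_def)

lemma phi_add: "\<phi> (x + y) = \<phi> x + \<phi> y"
  and phi_scale: "\<phi> (scV c x) = scK c (\<phi> x)"
  and phi_vac: "\<phi> oneV = oneK"
  and phi_Y: "\<phi> (YV x n y) = YK (\<phi> x) n (\<phi> y)"
  using phi_hom by (simp_all add: nva_hom_def)

lemma psi_zero: "\<psi> 0 = 0"
  using psi_scale[of 0 0] by simp

lemma sigma_Y: "g \<in> carrier G \<Longrightarrow> \<sigma> g (YU x n y) = YU (\<sigma> g x) n (\<sigma> g y)"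
  using action by (simp add: nva_group_action_def nva_hom_def)

lemma sigma_one: "\<sigma> \<one>\<^bsub>G\<^esub> = id"
  using action by (simp add: nva_group_action_def)

lemma sigma_inv_cancel:
  assumes "g \<in> carrier G"
  shows "\<sigma> g (\<sigma> (inv\<^bsub>G\<^esub> g) x) = x"
proof -
  have "\<sigma> g \<circ> \<sigma> (inv\<^bsub>G\<^esub> g) = \<sigma> (g \<otimes>\<^bsub>G\<^esub> inv\<^bsub>G\<^esub> g)"
    using action assms group.inv_closed[OF group assms] by (simp add: nva_group_action_def)
  then show ?thesis
    using group.r_inv[OF group assms] sigma_one by (metis comp_apply id_apply)
qed

lemma homogeneous_decomposition:
  obtains vs where "finite {g. vs g \<noteq> 0}"
    and "\<And>g. vs g \<noteq> 0 \<Longrightarrow> g \<in> carrier G \<and> vs g \<in> Vg g"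
    and "v = (\<Sum>g\<in>{g. vs g \<noteq> 0}. vs g)"
proof -
  from graded obtain vs where "finite {g. vs g \<noteq> 0}"
    and "\<forall>g. (g \<in> carrier G \<longrightarrow> vs g \<in> Vg g) \<and> (g \<notin> carrier G \<longrightarrow> vs g = 0)"
    and "v = (\<Sum>g\<in>{g. vs g \<noteq> 0}. vs g)"
    unfolding nva_graded_def by metis
  then show thesis
    by (intro that[of vs]) auto
qed

lemma vac_homogeneous: "oneV \<in> Vg \<one>\<^bsub>G\<^esub>"
  using graded by (simp add: nva_graded_def)

definition mu :: "'u \<Rightarrow> 'v \<Rightarrow> 'k" where
  "mu u v = YK (\<psi> u) (-1) (\<phi> v)"

lemma linear_mu_left: "Vector_Spaces.linear scU scK (\<lambda>u. mu u v)"
  by (simp add: Vector_Spaces.linear_iff mu_def psi_add psi_scale K.Y_add_left K.Y_scale_left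
      U.vector_space_axioms K.vector_space_axioms)

lemma linear_mu_right: "Vector_Spaces.linear scV scK (mu u)"
  by (simp add: Vector_Spaces.linear_iff mu_def phi_add phi_scale K.Y_add_right K.Y_scale_right
      V.vector_space_axioms K.vector_space_axioms)

lemma mu_zero_left: "mu 0 v = 0"
  by (simp add: mu_def psi_zero K.Y_zero_left)

lemma phi_mode_mu:
  assumes "g \<in> carrier G" "v \<in> Vg g"
  shows "YK (\<phi> v) j (mu x y) = mu (\<sigma> g x) (YV v j y)"
  using commute assms by (simp add: mu_def phi_Y)

lemma mu_homogeneous_swap:
  assumes "k \<in> carrier G" "y \<in> Vg k"
  shows "mu x y = YK (\<phi> y) (-1) (\<psi> (\<sigma> (inv\<^bsub>G\<^esub> k) x))"
proof -
  have "YK (\<phi> y) (-1) (YK (\<psi> (\<sigma> (inv\<^bsub>G\<^esub> k) x)) (-1) oneK)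
      = YK (\<psi> (\<sigma> k (\<sigma> (inv\<^bsub>G\<^esub> k) x))) (-1) (YK (\<phi> y) (-1) oneK)"
    using commute assms by blast
  then show ?thesis
    by (simp add: K.Y_vac_right_minus_one sigma_inv_cancel[OF assms(1)] mu_def)
qed

text \<open>After moving \<open>\<phi>(y)\<close> to the left, \<open>\<psi>(u)_i\<close> only meets the \<open>\<psi>\<close>-factor; the twist by
  \<open>k^-1\<close> is undone because \<open>\<sigma>\<close> acts by automorphisms.\<close>

lemma psi_mode_mu_homogeneous:
  assumes k: "k \<in> carrier G" and y: "y \<in> Vg k"
  shows "YK (\<psi> u) i (mu x y) = mu (YU u i x) y"
proof -
  let ?s = "\<sigma> (inv\<^bsub>G\<^esub> k)"
  have "YK (\<psi> u) i (mu x y) = YK (\<psi> (\<sigma> k (?s u))) i (YK (\<phi> y) (-1) (\<psi> (?s x)))"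
    using mu_homogeneous_swap[OF k y] sigma_inv_cancel[OF k] by simp
  also have "\<dots> = YK (\<phi> y) (-1) (YK (\<psi> (?s u)) i (\<psi> (?s x)))"
    using commute k y by metis
  also have "\<dots> = YK (\<phi> y) (-1) (\<psi> (?s (YU u i x)))"
    by (simp add: psi_Y sigma_Y[OF group.inv_closed[OF group k]])
  also have "\<dots> = mu (YU u i x) y"
    using mu_homogeneous_swap[OF k y] by simp
  finally show ?thesis .
qed

lemma psi_mode_mu: "YK (\<psi> u) i (mu x y) = mu (YU u i x) y"
proof -
  obtain ys where ys: "finite {g. ys g \<noteq> 0}" "\<And>g. ys g \<noteq> 0 \<Longrightarrow> g \<in> carrier G \<and> ys g \<in> Vg g"
    "y = (\<Sum>g\<in>{g. ys g \<noteq> 0}. ys g)"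
    using homogeneous_decomposition[of y] by metis
  have "YK (\<psi> u) i (mu x y) = (\<Sum>g\<in>{g. ys g \<noteq> 0}. YK (\<psi> u) i (mu x (ys g)))"
    by (simp add: ys(3) linearD_sum[OF linear_mu_right] linearD_sum[OF K.linear_Y_right])
  also have "\<dots> = (\<Sum>g\<in>{g. ys g \<noteq> 0}. mu (YU u i x) (ys g))"
  proof (rule sum.cong[OF refl])
    fix g assume "g \<in> {g. ys g \<noteq> 0}"
    then have "g \<in> carrier G" "ys g \<in> Vg g"
      using ys(2) by auto
    then show "YK (\<psi> u) i (mu x (ys g)) = mu (YU u i x) (ys g)"
      by (rule psi_mode_mu_homogeneous)
  qed
  also have "\<dots> = mu (YU u i x) y"
    by (simp add: ys(3) linearD_sum[OF linear_mu_right])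
  finally show ?thesis .
qed

lemma mu_mode_mu:
  assumes "g \<in> carrier G" "v \<in> Vg g"
  shows "YK (mu u v) n (mu u' v') = (\<Sum>i\<in>{i. YU u i (\<sigma> g u') \<noteq> 0 \<and> YV v (n - 1 - i) v' \<noteq> 0}.
    mu (YU u i (\<sigma> g u')) (YV v (n - 1 - i) v'))"
proof -
  let ?h = "\<lambda>i. mu (YU u i (\<sigma> g u')) (YV v (n - 1 - i) v')"
  have iterate: "YK (\<psi> u) m (YK (\<phi> v) k (mu u' v')) = mu (YU u m (\<sigma> g u')) (YV v k v')" for m k
    by (simp add: phi_mode_mu[OF assms] psi_mode_mu)
  obtain N where N: "\<And>m. N \<le> m \<Longrightarrow> YU u m (\<sigma> g u') = 0"
    using U.Y_truncation by blast
  have "YK (mu u v) n (mu u' v') = (\<Sum>i\<in>{i. ?h i \<noteq> 0}. ?h i)"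
    unfolding mu_def[of u v]
    by (subst K.Y_product_minus_one[where N=N]) (simp_all add: iterate N mu_zero_left)
  also have "\<dots> = (\<Sum>i\<in>{i. YU u i (\<sigma> g u') \<noteq> 0 \<and> YV v (n - 1 - i) v' \<noteq> 0}. ?h i)"
  proof (rule sum.mono_neutral_left)
    obtain M where M: "\<And>k. M \<le> k \<Longrightarrow> YV v k v' = 0"
      using V.Y_truncation by blast
    have "{i. YU u i (\<sigma> g u') \<noteq> 0 \<and> YV v (n - 1 - i) v' \<noteq> 0} \<subseteq> {n - M .. N}"
    proof
      fix i assume "i \<in> {i. YU u i (\<sigma> g u') \<noteq> 0 \<and> YV v (n - 1 - i) v' \<noteq> 0}"
      then have "i < N" "n - 1 - i < M"
        using N M not_le by blast+
      then show "i \<in> {n - M .. N}" by simp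
    qed
    then show "finite {i. YU u i (\<sigma> g u') \<noteq> 0 \<and> YV v (n - 1 - i) v' \<noteq> 0}"
      by (rule finite_subset) simp
  qed (auto simp: mu_zero_left linearD_zero[OF linear_mu_right])
  finally show ?thesis .
qed

definition smash_map :: "('u, 'v) tens \<Rightarrow> 'k" where
  "smash_map = (SOME f. Vector_Spaces.linear tscale scK f \<and> (\<forall>u v. f (tens scU scV u v) = mu u v))"

lemma linear_smash_map: "Vector_Spaces.linear tscale scK smash_map"
  and smash_map_tens: "smash_map (tens scU scV u v) = mu u v"
proof -
  obtain f where "Vector_Spaces.linear tscale scK f" "\<And>u v. f (tens scU scV u v) = mu u v"
    using tensor_universal[OF K.vector_space_axioms linear_mu_left linear_mu_right] by metis
  then have "\<exists>f. Vector_Spaces.linear tscale scK f \<and> (\<forall>u v. f (tens scU scV u v) = mu u v)"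
    by blast
  from someI_ex[OF this] show "Vector_Spaces.linear tscale scK smash_map"
    and "smash_map (tens scU scV u v) = mu u v"
    unfolding smash_map_def by simp_all
qed

lemma Ys_add_left: "a \<in> tensor_space scU scV \<Longrightarrow> b \<in> tensor_space scU scV \<Longrightarrow> c \<in> tensor_space scU scV \<Longrightarrow>
    Ys (a + b) n c = Ys a n c + Ys b n c"
  and Ys_add_right: "a \<in> tensor_space scU scV \<Longrightarrow> b \<in> tensor_space scU scV \<Longrightarrow> c \<in> tensor_space scU scV \<Longrightarrow>
    Ys c n (a + b) = Ys c n a + Ys c n b"
  and Ys_scale_left: "a \<in> tensor_space scU scV \<Longrightarrow> b \<in> tensor_space scU scV \<Longrightarrow>
    Ys (tscale z a) n b = tscale z (Ys a n b)"
  and Ys_scale_right: "a \<in> tensor_space scU scV \<Longrightarrow> b \<in> tensor_space scU scV \<Longrightarrow>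
    Ys b n (tscale z a) = tscale z (Ys b n a)"
  using smash unfolding smash_Y_def Let_def by blast+

lemma Ys_tens:
  assumes "g \<in> carrier G" "v \<in> Vg g"
  shows "Ys (tens scU scV u v) n (tens scU scV u' v')
    = (\<Sum>i\<in>{i. YU u i (\<sigma> g u') \<noteq> 0 \<and> YV v (n - 1 - i) v' \<noteq> 0}.
         tens scU scV (YU u i (\<sigma> g u')) (YV v (n - 1 - i) v'))"
  using smash assms unfolding smash_Y_def Let_def by blast

lemma smash_map_Ys_tens_homogeneous:
  assumes "g \<in> carrier G" "v \<in> Vg g"
  shows "smash_map (Ys (tens scU scV u v) n (tens scU scV u' v'))
    = YK (smash_map (tens scU scV u v)) n (smash_map (tens scU scV u' v'))"
  by (simp add: Ys_tens[OF assms] linearD_sum[OF linear_smash_map] smash_map_tens mu_mode_mu[OF assms])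

lemma Ys_sum_left:
  assumes "finite S" "\<And>i. i \<in> S \<Longrightarrow> a i \<in> tensor_space scU scV" "c \<in> tensor_space scU scV"
  shows "Ys (\<Sum>i\<in>S. a i) n c = (\<Sum>i\<in>S. Ys (a i) n c)"
  using assms
proof (induction S rule: finite_induct)
  case empty
  have "0 \<in> tensor_space scU scV"
    unfolding tensor_space_def by (rule T.span_zero)
  then have "Ys (0 + 0) n c = Ys 0 n c + Ys 0 n c"
    using Ys_add_left empty.prems(2) by blast
  then have "Ys 0 n c = 0"
    by (metis add.right_neutral add_left_cancel)
  then show ?case
    by (simp only: sum.empty)
next
  case (insert i S)
  have "(\<Sum>i\<in>S. a i) \<in> tensor_space scU scV"
    using insert.prems(1) unfolding tensor_space_def by (intro T.span_sum) auto
  moreover have "a i \<in> tensor_space scU scV"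
    using insert.prems(1) by simp
  ultimately have "Ys (a i + (\<Sum>i\<in>S. a i)) n c = Ys (a i) n c + (\<Sum>i\<in>S. Ys (a i) n c)"
    using insert.IH insert.prems by (simp only: Ys_add_left) simp
  then show ?case
    by (simp only: sum.insert[OF insert.hyps])
qed

lemma smash_map_Ys_tens:
  assumes "a \<in> tensor_space scU scV"
  shows "smash_map (Ys a n (tens scU scV u' v')) = YK (smash_map a) n (mu u' v')"
  using assms
proof (induction a arbitrary: n rule: tensor_space_induct)
  case (tens u v)
  obtain vs where vs: "finite {g. vs g \<noteq> 0}" "\<And>g. vs g \<noteq> 0 \<Longrightarrow> g \<in> carrier G \<and> vs g \<in> Vg g"
    "v = (\<Sum>g\<in>{g. vs g \<noteq> 0}. vs g)"
    using homogeneous_decomposition[of v] by metis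
  have "tens scU scV u v = (\<Sum>g\<in>{g. vs g \<noteq> 0}. tens scU scV u (vs g))"
    by (subst vs(3)) (rule linearD_sum[OF linear_tens_right[OF U.vector_space_axioms V.vector_space_axioms]])
  then have "smash_map (Ys (tens scU scV u v) n (tens scU scV u' v'))
      = (\<Sum>g\<in>{g. vs g \<noteq> 0}. smash_map (Ys (tens scU scV u (vs g)) n (tens scU scV u' v')))"
    by (simp add: Ys_sum_left vs(1) tens_in_tensor_space linearD_sum[OF linear_smash_map])
  also have "\<dots> = (\<Sum>g\<in>{g. vs g \<noteq> 0}. YK (mu u (vs g)) n (mu u' v'))"
  proof (rule sum.cong[OF refl])
    fix g assume "g \<in> {g. vs g \<noteq> 0}"
    then have "g \<in> carrier G" "vs g \<in> Vg g"
      using vs(2) by auto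
    then show "smash_map (Ys (tens scU scV u (vs g)) n (tens scU scV u' v')) = YK (mu u (vs g)) n (mu u' v')"
      by (simp add: smash_map_Ys_tens_homogeneous smash_map_tens)
  qed
  also have "\<dots> = YK (smash_map (tens scU scV u v)) n (mu u' v')"
    by (simp add: smash_map_tens vs(3) linearD_sum[OF linear_mu_right] linearD_sum[OF K.linear_Y_left])
  finally show ?case .
next
  case (add a b)
  then show ?case
    by (simp only: Ys_add_left[OF add.hyps tens_in_tensor_space] linearD_add[OF linear_smash_map]
        K.Y_add_left add.IH)
next
  case (scale c a)
  then show ?case
    by (simp only: Ys_scale_left[OF scale.hyps tens_in_tensor_space] linearD_scale[OF linear_smash_map]
        K.Y_scale_left scale.IH)
qed

lemma smash_map_Ys:
  assumes "a \<in> tensor_space scU scV" "b \<in> tensor_space scU scV"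
  shows "smash_map (Ys a n b) = YK (smash_map a) n (smash_map b)"
  using assms(2)
proof (induction b arbitrary: n rule: tensor_space_induct)
  case (tens u v)
  then show ?case
    using smash_map_Ys_tens[OF assms(1)] by (simp add: smash_map_tens)
next
  case (add b b')
  then show ?case
    by (simp only: Ys_add_right[OF add.hyps assms(1)] linearD_add[OF linear_smash_map]
        K.Y_add_right add.IH)
next
  case (scale c b)
  then show ?case
    by (simp only: Ys_scale_right[OF scale.hyps assms(1)] linearD_scale[OF linear_smash_map]
        K.Y_scale_right scale.IH)
qed

lemma smash_map_extends:
  "smash_map (tens scU scV u oneV) = \<psi> u" "smash_map (tens scU scV oneU v) = \<phi> v"
  by (simp_all add: smash_map_tens mu_def phi_vac psi_vac K.Y_vac_right_minus_one K.Y_vac_left)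

lemma nva_hom_smash_map:
  "nva_hom tscale (tens scU scV oneU oneV) Ys (tensor_space scU scV) scK oneK YK smash_map"
  unfolding nva_hom_def
  by (simp add: linearD_add[OF linear_smash_map] linearD_scale[OF linear_smash_map]
      smash_map_extends psi_vac smash_map_Ys)

lemma Ys_vac_tens: "Ys (tens scU scV u oneV) (-1) (tens scU scV oneU v) = tens scU scV u v"
proof -
  have one: "\<one>\<^bsub>G\<^esub> \<in> carrier G"
    using group by (simp add: group.is_monoid monoid.one_closed)
  have "Ys (tens scU scV u oneV) (-1) (tens scU scV oneU v)
      = (\<Sum>i\<in>{i. YU u i oneU \<noteq> 0 \<and> YV oneV (- 2 - i) v \<noteq> 0}. tens scU scV (YU u i oneU) (YV oneV (- 2 - i) v))"
    using Ys_tens[OF one vac_homogeneous, of u "-1" oneU v] sigma_one by simp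
  also have "\<dots> = tens scU scV u v"
  proof (cases "u = 0 \<or> v = 0")
    case True
    then have "{i. YU u i oneU \<noteq> 0 \<and> YV oneV (- 2 - i) v \<noteq> 0} = {}"
      by (auto simp: U.Y_zero_left V.Y_vac_left)
    moreover have "tens scU scV u v = 0"
      using True linearD_zero[OF linear_tens_left[OF U.vector_space_axioms V.vector_space_axioms]]
        linearD_zero[OF linear_tens_right[OF U.vector_space_axioms V.vector_space_axioms]] by auto
    ultimately show ?thesis by (simp only: sum.empty)
  next
    case False
    then have "{i. YU u i oneU \<noteq> 0 \<and> YV oneV (- 2 - i) v \<noteq> 0} = {-1}"
      by (auto simp: U.Y_vac_right_nonneg U.Y_vac_right_minus_one V.Y_vac_left)
    then show ?thesis by (simp add: U.Y_vac_right_minus_one V.Y_vac_left)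
  qed
  finally show ?thesis .
qed

lemma smash_map_unique:
  assumes hom: "nva_hom tscale (tens scU scV oneU oneV) Ys (tensor_space scU scV) scK oneK YK f"
    and f_U: "\<And>u. f (tens scU scV u oneV) = \<psi> u" and f_V: "\<And>v. f (tens scU scV oneU v) = \<phi> v"
    and "a \<in> tensor_space scU scV"
  shows "f a = smash_map a"
  using \<open>a \<in> tensor_space scU scV\<close>
proof (induction a rule: tensor_space_induct)
  case (tens u v)
  have "f (Ys (tens scU scV u oneV) (-1) (tens scU scV oneU v))
      = YK (f (tens scU scV u oneV)) (-1) (f (tens scU scV oneU v))"
    using hom tens_in_tensor_space unfolding nva_hom_def by blast
  then have "f (tens scU scV u v) = YK (\<psi> u) (-1) (\<phi> v)"
    by (simp add: Ys_vac_tens f_U f_V)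
  then show ?case
    by (simp add: smash_map_tens mu_def)
next
  case (add a b)
  have "f (a + b) = f a + f b"
    using hom add.hyps unfolding nva_hom_def by blast
  then show ?case
    by (simp only: linearD_add[OF linear_smash_map] add.IH)
next
  case (scale c a)
  have "f (tscale c a) = scK c (f a)"
    using hom scale.hyps unfolding nva_hom_def by blast
  then show ?case
    by (simp only: linearD_scale[OF linear_smash_map] scale.IH)
qed

end

theorem proposition2p15:
  fixes G :: "('g, 'm) monoid_scheme"
    and scU :: "complex \<Rightarrow> 'u::ab_group_add \<Rightarrow> 'u" and oneU :: 'u and YU :: "'u \<Rightarrow> int \<Rightarrow> 'u \<Rightarrow> 'u"
    and \<sigma> :: "'g \<Rightarrow> 'u \<Rightarrow> 'u"
    and scV :: "complex \<Rightarrow> 'v::ab_group_add \<Rightarrow> 'v" and oneV :: 'v and YV :: "'v \<Rightarrow> int \<Rightarrow> 'v \<Rightarrow> 'v"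
    and Vg :: "'g \<Rightarrow> 'v set"
    and Ys :: "('u, 'v) tens \<Rightarrow> int \<Rightarrow> ('u, 'v) tens \<Rightarrow> ('u, 'v) tens"
    and scK :: "complex \<Rightarrow> 'k::ab_group_add \<Rightarrow> 'k" and oneK :: 'k and YK :: "'k \<Rightarrow> int \<Rightarrow> 'k \<Rightarrow> 'k"
    and \<psi> :: "'u \<Rightarrow> 'k" and \<phi> :: "'v \<Rightarrow> 'k"
  assumes "group G"
    and "nva scU oneU YU"
    and "nva_group_action G scU oneU YU \<sigma>"
    and "nva_graded G scV oneV YV Vg"
    and "smash_Y G scU YU \<sigma> scV YV Vg Ys"
    and "nva scK oneK YK"
    and "nva_hom scU oneU YU UNIV scK oneK YK \<psi>"
    and "nva_hom scV oneV YV UNIV scK oneK YK \<phi>"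
    and "\<forall>g\<in>carrier G. \<forall>u. \<forall>v\<in>Vg g. \<forall>m n w.
           YK (\<phi> v) m (YK (\<psi> u) n w) = YK (\<psi> (\<sigma> g u)) n (YK (\<phi> v) m w)"
  shows "\<exists>f. nva_hom tscale (tens scU scV oneU oneV) Ys (tensor_space scU scV) scK oneK YK f
           \<and> (\<forall>u. f (tens scU scV u oneV) = \<psi> u) \<and> (\<forall>v. f (tens scU scV oneU v) = \<phi> v)
           \<and> (\<forall>f'. nva_hom tscale (tens scU scV oneU oneV) Ys (tensor_space scU scV) scK oneK YK f'
                   \<and> (\<forall>u. f' (tens scU scV u oneV) = \<psi> u) \<and> (\<forall>v. f' (tens scU scV oneU v) = \<phi> v)
                   \<longrightarrow> (\<forall>a\<in>tensor_space scU scV. f' a = f a))"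
proof -
  interpret smash_universal G scU oneU YU \<sigma> scV oneV YV Vg Ys scK oneK YK \<psi> \<phi>
    using assms by (rule smash_universal.intro)
  show ?thesis
  proof (intro exI[of _ smash_map] conjI allI impI ballI)
    fix f' a
    assume "nva_hom tscale (tens scU scV oneU oneV) Ys (tensor_space scU scV) scK oneK YK f'
      \<and> (\<forall>u. f' (tens scU scV u oneV) = \<psi> u) \<and> (\<forall>v. f' (tens scU scV oneU v) = \<phi> v)"
      and "a \<in> tensor_space scU scV"
    then show "f' a = smash_map a"
      by (intro smash_map_unique) simp_all
  qed (simp_all add: nva_hom_smash_map smash_map_extends)
qed

end
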